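(* Let $m,n,r$ be positive integers with $r\le n\le m$. Let $X\in\mathbb C^{m\times n}$ have rank $n$, and write $X=\begin{bmatrix}Y\\ \widetilde Y\end{bmatrix}$ with $Y\in\mathbb C^{r\times n}$ of rank $r$ and $\widetilde Y\in\mathbb C^{(m-r)\times n}$. Let $\Pi_X:=X(X^*X)^{-1}X^*$ and let $\Pi_X^{[r],[r]}$ be its top-left $r\times r$ submatrix. Then $\Pi_X^{[r],[r]}=I_r$ if and only if $\mathrm{colspan}(\widetilde Y)=\mathrm{colspan}(\widetilde YA)$ for some matrix $A$ whose column space equals $\ker Y$.
   Context: $\mathrm{colspan}(B)$ denotes the column space of a matrix $B$. *)

theory Defs
  imports "Jordan_Normal_Form.Schur_Decomposition" "Jordan_Normal_Form.Gauss_Jordan_Elimination"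
    "Jordan_Normal_Form.DL_Rank" "Jordan_Normal_Form.DL_Submatrix" "Jordan_Normal_Form.Matrix_Kernel"
begin

definition colspan :: "'a::field mat \<Rightarrow> 'a vec set" where
  "colspan B = vec_space.col_space (dim_row B) B"

definition mrank :: "'a::field mat \<Rightarrow> nat" where
  "mrank B = vec_space.rank (dim_row B) B"

definition proj_mat :: "complex mat \<Rightarrow> complex mat" where
  "proj_mat X = X * the (mat_inverse (mat_adjoint X * X)) * mat_adjoint X"

end

theory Submission
  imports Defs
begin

(* Write G = X^* X = Y^* Y + Yt^* Yt and M = G^-1, so that the top-left block of the projector is
   Y M Y^*.  If Y M Y^* = I, put V = M Y^*: then Y V = I and I = V^* G V = I + (Yt V)^* (Yt V),
   so Yt V = 0 and A = I - V Y, whose column space is ker Y, satisfies Yt A = Yt.  Conversely, if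
   colspan Yt = colspan (Yt A) with colspan A = ker Y, every w can be corrected by an element of
   ker Y into ker Yt without changing Y w.  As Y is onto, every u is Y v with Yt v = 0; then
   G v = Y^* u, hence Y M Y^* u = Y v = u. *)

lemma conjugate_one [simp]: "conjugate (1 :: 'a :: conjugatable_field) = 1"
proof -
  have "conjugate (conjugate 1) = conjugate (1 * conjugate (1 :: 'a))" by simp
  also have "\<dots> = conjugate 1 * 1" by (simp only: conjugate_dist_mul conjugate_id)
  finally show ?thesis by simp
qed

lemma conjugate_append_vec: "conjugate (v @\<^sub>v w) = conjugate v @\<^sub>v conjugate w"
  by (rule eq_vecI) auto

lemma mult_mat_vec_zero:
  "A \<in> carrier_mat nr nc \<Longrightarrow> A *\<^sub>v 0\<^sub>v nc = 0\<^sub>v nr"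
  by (intro eq_vecI) auto

lemma eq_one_mat_if_mult_vec_id:
  fixes B :: "'a :: semiring_1 mat"
  assumes B: "B \<in> carrier_mat n n" and id: "\<And>u. u \<in> carrier_vec n \<Longrightarrow> B *\<^sub>v u = u"
  shows "B = 1\<^sub>m n"
proof (rule eq_matI)
  fix i j assume "i < dim_row (1\<^sub>m n :: 'a mat)" "j < dim_col (1\<^sub>m n :: 'a mat)"
  then have i: "i < n" and j: "j < n" by auto
  have "B $$ (i, j) = (B *\<^sub>v unit_vec n j) $ i" using B i j by simp
  then show "B $$ (i, j) = 1\<^sub>m n $$ (i, j)" using id[of "unit_vec n j"] i j by simp
qed (use B in auto)

lemma colspan_eq:
  "A \<in> carrier_mat nr nc \<Longrightarrow> colspan A = {y \<in> carrier_vec nr. \<exists>x\<in>carrier_vec nc. A *\<^sub>v x = y}"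
  unfolding colspan_def using vec_space.col_space_eq[of A nr nc] by auto

lemma submatrix_lessThan:
  assumes "p \<le> dim_row A" and "q \<le> dim_col A"
  shows "submatrix A {..<p} {..<q} = mat p q (\<lambda>(i, j). A $$ (i, j))"
proof -
  have pick: "pick {..<k} i = i" if "i < k" for i k :: nat
  proof -
    have "{a \<in> {..<k}. a < i} = {..<i}" using that by auto
    then show ?thesis using pick_card_in_set[of i "{..<k}"] that by simp
  qed
  have "{i. i < dim_row A \<and> i \<in> {..<p}} = {..<p}" "{j. j < dim_col A \<and> j \<in> {..<q}} = {..<q}"
    using assms by auto
  then show ?thesis unfolding submatrix_def by (intro eq_matI) (auto simp: pick)
qed

lemma row_append_rows_top:
  assumes "A \<in> carrier_mat nr1 nc" and "B \<in> carrier_mat nr2 nc" and "i < nr1"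
  shows "row (A @\<^sub>r B) i = row A i"
  using assms unfolding append_rows_def by (intro eq_vecI) auto

lemma dim_row_mat_adjoint [simp]: "dim_row (mat_adjoint A) = dim_col A"
  and dim_col_mat_adjoint [simp]: "dim_col (mat_adjoint A) = dim_row A"
  unfolding mat_adjoint_def by simp_all

lemma mat_adjoint_carrier_mat [simp]:
  "A \<in> carrier_mat nr nc \<Longrightarrow> mat_adjoint A \<in> carrier_mat nc nr"
  by auto

lemma index_mat_adjoint [simp]:
  "i < dim_col A \<Longrightarrow> j < dim_row A \<Longrightarrow> mat_adjoint A $$ (i, j) = conjugate (A $$ (j, i))"
  unfolding mat_adjoint_def by (simp add: mat_of_rows_index)

lemma row_mat_adjoint: "i < dim_col A \<Longrightarrow> row (mat_adjoint A) i = conjugate (col A i)"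
  by (rule eq_vecI) auto

lemma col_mat_adjoint: "j < dim_row A \<Longrightarrow> col (mat_adjoint A) j = conjugate (row A j)"
  by (rule eq_vecI) auto

lemma mat_adjoint_mat_adjoint [simp]: "mat_adjoint (mat_adjoint A) = A"
  by (rule eq_matI) auto

lemma mat_adjoint_one [simp]: "mat_adjoint (1\<^sub>m n :: 'a :: conjugatable_field mat) = 1\<^sub>m n"
  by (rule eq_matI) auto

lemma mat_adjoint_mult:
  fixes A :: "'a :: conjugatable_field mat"
  assumes A: "A \<in> carrier_mat nr n" and B: "B \<in> carrier_mat n nc"
  shows "mat_adjoint (A * B) = mat_adjoint B * mat_adjoint A"
proof (rule eq_matI)
  fix i j assume "i < dim_row (mat_adjoint B * mat_adjoint A)" "j < dim_col (mat_adjoint B * mat_adjoint A)"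
  then have i: "i < nc" and j: "j < nr" using A B by auto
  have "mat_adjoint (A * B) $$ (i, j) = conjugate (row A j \<bullet> col B i)"
    using A B i j by simp
  also have "\<dots> = conjugate (col B i) \<bullet> conjugate (row A j)"
    using A B i j by (simp add: conjugate_sprod_vec[of _ n] comm_scalar_prod[of _ n])
  also have "\<dots> = (mat_adjoint B * mat_adjoint A) $$ (i, j)"
    using A B i j by (simp add: row_mat_adjoint col_mat_adjoint)
  finally show "mat_adjoint (A * B) $$ (i, j) = (mat_adjoint B * mat_adjoint A) $$ (i, j)" .
qed (use A B in auto)

lemma mat_adjoint_append_rows_mult_self:
  fixes A :: "'a :: conjugatable_field mat"
  assumes A: "A \<in> carrier_mat nr1 nc" and B: "B \<in> carrier_mat nr2 nc"
  shows "mat_adjoint (A @\<^sub>r B) * (A @\<^sub>r B) = mat_adjoint A * A + mat_adjoint B * B"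
proof (rule eq_matI)
  fix i j assume "i < dim_row (mat_adjoint A * A + mat_adjoint B * B)"
    "j < dim_col (mat_adjoint A * A + mat_adjoint B * B)"
  then have i: "i < nc" and j: "j < nc" using A B by auto
  have AB: "A @\<^sub>r B \<in> carrier_mat (nr1 + nr2) nc" using A B by simp
  have col_AB: "col (A @\<^sub>r B) k = col A k @\<^sub>v col B k" if "k < nc" for k
    using A B that unfolding append_rows_def by (subst col_four_block_mat) auto
  have "(mat_adjoint (A @\<^sub>r B) * (A @\<^sub>r B)) $$ (i, j)
      = conjugate (col (A @\<^sub>r B) i) \<bullet> col (A @\<^sub>r B) j"
    using AB i j by (simp add: row_mat_adjoint)
  also have "\<dots> = conjugate (col A i) \<bullet> col A j + conjugate (col B i) \<bullet> col B j"
    using A B i j by (simp add: col_AB conjugate_append_vec scalar_prod_append[of _ nr1 _ nr2])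
  also have "\<dots> = (mat_adjoint A * A + mat_adjoint B * B) $$ (i, j)"
    using A B i j by (simp add: row_mat_adjoint)
  finally show "(mat_adjoint (A @\<^sub>r B) * (A @\<^sub>r B)) $$ (i, j)
      = (mat_adjoint A * A + mat_adjoint B * B) $$ (i, j)" .
qed (use A B carrier_matD[OF carrier_append_rows[OF A B]] in auto)

lemma mat_adjoint_mult_congruence:
  fixes A :: "'a :: conjugatable_field mat"
  assumes A: "A \<in> carrier_mat nr nc" and V: "V \<in> carrier_mat nc k"
  shows "mat_adjoint V * (mat_adjoint A * A) * V = mat_adjoint (A * V) * (A * V)"
proof -
  have A': "mat_adjoint A \<in> carrier_mat nc nr" and V': "mat_adjoint V \<in> carrier_mat k nc"
    using A V by simp_all
  show ?thesis
    by (simp only: mat_adjoint_mult[OF A V] assoc_mult_mat[OF V' A' A, symmetric]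
        assoc_mult_mat[OF mult_carrier_mat[OF V' A'] A V])
qed

lemma mat_adjoint_mult_self_eq_0:
  fixes A :: "'a :: conjugatable_ordered_field mat"
  assumes A: "A \<in> carrier_mat nr nc" and AA: "mat_adjoint A * A = 0\<^sub>m nc nc"
  shows "A = 0\<^sub>m nr nc"
proof -
  have col_0: "col A j = 0\<^sub>v nr" if j: "j < nc" for j
  proof -
    have "col A j \<bullet>c col A j = conjugate (col A j) \<bullet> col A j"
      using A j by (simp add: conjugate_vec_sprod_comm[of _ nr])
    also have "\<dots> = (mat_adjoint A * A) $$ (j, j)"
      using A j by (simp add: row_mat_adjoint)
    finally show ?thesis using AA A j conjugate_square_eq_0_vec[of "col A j" nr] by simp
  qed
  show ?thesis
  proof (rule eq_matI)
    fix i j assume "i < dim_row (0\<^sub>m nr nc :: 'a mat)" "j < dim_col (0\<^sub>m nr nc :: 'a mat)"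
    then have i: "i < nr" and j: "j < nc" by auto
    have "A $$ (i, j) = col A j $ i" using A i j by simp
    then show "A $$ (i, j) = 0\<^sub>m nr nc $$ (i, j)" using col_0[OF j] i j by simp
  qed (use A in auto)
qed

lemma mat_adjoint_mult_self_mult_vec_eq_0:
  fixes A :: "'a :: conjugatable_ordered_field mat"
  assumes A: "A \<in> carrier_mat nr nc" and v: "v \<in> carrier_vec nc"
    and AAv: "(mat_adjoint A * A) *\<^sub>v v = 0\<^sub>v nc"
  shows "A *\<^sub>v v = 0\<^sub>v nr"
proof -
  define V where "V = mat_of_cols nc [v]"
  have V: "V \<in> carrier_mat nc 1" unfolding V_def using mat_of_cols_carrier[of nc "[v]"] by simp
  have AA: "mat_adjoint A * A \<in> carrier_mat nc nc" using A mat_adjoint_carrier_mat[OF A] by auto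
  have AAV: "mat_adjoint A * A * V = 0\<^sub>m nc 1"
  proof (rule eq_matI)
    fix i j assume "i < dim_row (0\<^sub>m nc 1 :: 'a mat)" "j < dim_col (0\<^sub>m nc 1 :: 'a mat)"
    then have i: "i < nc" and j: "j = 0" by auto
    have "(mat_adjoint A * A * V) $$ (i, j) = ((mat_adjoint A * A) *\<^sub>v v) $ i"
      using carrier_matD[OF AA] i j v unfolding V_def by (simp add: mult_mat_vec_def)
    then show "(mat_adjoint A * A * V) $$ (i, j) = 0\<^sub>m nc 1 $$ (i, j)" using AAv i j by simp
  qed (use AA V in auto)
  have V': "mat_adjoint V \<in> carrier_mat 1 nc" using V by simp
  have "mat_adjoint (A * V) * (A * V) = mat_adjoint V * (mat_adjoint A * A * V)"
    using mat_adjoint_mult_congruence[OF A V] assoc_mult_mat[OF V' AA V] by simp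
  also have "\<dots> = 0\<^sub>m 1 1" unfolding AAV by (rule right_mult_zero_mat[OF V'])
  finally have "A * V = 0\<^sub>m nr 1"
    using mat_adjoint_mult_self_eq_0[OF mult_carrier_mat[OF A V]] by simp
  then show ?thesis
    using mat_vec_as_mat_mat_mult[OF A v] unfolding V_def by simp
qed

lemma mat_adjoint_right_inverse_of_self_adjoint:
  fixes G :: "'a :: conjugatable_field mat"
  assumes G: "G \<in> carrier_mat n n" and M: "M \<in> carrier_mat n n"
    and G_adj: "mat_adjoint G = G" and GM: "G * M = 1\<^sub>m n"
  shows "mat_adjoint M = M"
proof -
  have M': "mat_adjoint M \<in> carrier_mat n n" using M by simp
  have M'G: "mat_adjoint M * G = 1\<^sub>m n"
    using mat_adjoint_mult[OF G M] G_adj GM by simp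
  have "mat_adjoint M = mat_adjoint M * (G * M)" using right_mult_one_mat[OF M'] GM by simp
  also have "\<dots> = mat_adjoint M * G * M" using assoc_mult_mat[OF M' G M] by simp
  also have "\<dots> = M" using M M'G by simp
  finally show ?thesis .
qed

lemma (in vec_space) non_distinct_cols_rank_less:
  assumes A: "A \<in> carrier_mat n nc" and "\<not> distinct (cols A)"
  shows "rank A < nc"
proof -
  obtain S where S: "maximal S (\<lambda>T. T \<subseteq> set (cols A) \<and> lin_indpt T)"
    using maximal_exists[of "\<lambda>T. T \<subseteq> set (cols A) \<and> lin_indpt T" "card (set (cols A))" "{}"]
    by (meson List.finite_set card_mono empty_iff empty_subsetI finite_lin_indpt2 rev_finite_subset)
  then have "card S \<le> card (set (cols A))" by (simp add: card_mono maximal_def)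
  also have "card (set (cols A)) < nc"
    using assms card_distinct card_length cols_length carrier_matD(2) nat_less_le by metis
  finally show ?thesis using rank_card_indpt[OF A S] by simp
qed

lemma (in vec_space) full_col_rank_mult_vec_eq_0:
  assumes A: "A \<in> carrier_mat n nc" and rk: "rank A = nc"
    and v: "v \<in> carrier_vec nc" and Av: "A *\<^sub>v v = 0\<^sub>v n"
  shows "v = 0\<^sub>v nc"
proof (rule ccontr)
  assume "v \<noteq> 0\<^sub>v nc"
  then have "lin_dep (set (cols A)) \<or> \<not> distinct (cols A)"
    using lin_depI[OF A v _ Av] by blast
  then show False
    using full_rank_lin_indpt[OF A rk] non_distinct_cols_rank_less[OF A] rk by auto
qed

lemma (in vec_space) full_row_rank_col_space:
  assumes A: "A \<in> carrier_mat n nc" and rk: "rank A = n"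
  shows "col_space A = carrier_vec n"
proof -
  obtain S where S: "maximal S (\<lambda>T. T \<subseteq> set (cols A) \<and> lin_indpt T)"
    using maximal_exists[of "\<lambda>T. T \<subseteq> set (cols A) \<and> lin_indpt T" "card (set (cols A))" "{}"]
    by (meson List.finite_set card_mono empty_iff empty_subsetI finite_lin_indpt2 rev_finite_subset)
  have S_cols: "S \<subseteq> set (cols A)" and S_indpt: "lin_indpt S" using S by (auto simp: maximal_def)
  have cols: "set (cols A) \<subseteq> carrier_vec n" using A cols_dim by blast
  have card_S: "card S = n" using rank_card_indpt[OF A S] rk by simp
  have "finite S" using S_cols finite_subset by blast
  then have "basis S"
    by (intro dim_li_is_basis) (use fin_dim S_cols S_indpt cols card_S dim_is_n in auto)
  then have "carrier_vec n \<subseteq> span (set (cols A))"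
    using span_is_monotone[OF S_cols] unfolding basis_def by auto
  then show ?thesis using span_is_subset2[OF cols] unfolding col_space_def by auto
qed

lemma mat_inverse_exists_if_det_nonzero:
  fixes A :: "'a :: field mat"
  assumes A: "A \<in> carrier_mat n n" and "det A \<noteq> 0"
  obtains B where "mat_inverse A = Some B"
  using mat_inverse(1)[OF A, where b = "()"] det_non_zero_imp_unit[OF assms, where b = "()"]
  by (cases "mat_inverse A") auto

lemma det_mat_adjoint_mult_self_nonzero:
  fixes X :: "'a :: conjugatable_ordered_field mat"
  assumes X: "X \<in> carrier_mat m n" and rk: "vec_space.rank m X = n"
  shows "det (mat_adjoint X * X) \<noteq> 0"
proof -
  have "mat_adjoint X * X \<in> carrier_mat n n" using X mat_adjoint_carrier_mat[OF X] by auto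
  then show ?thesis
    using det_0_iff_vec_prod_zero_field mat_adjoint_mult_self_mult_vec_eq_0[OF X]
      vec_space.full_col_rank_mult_vec_eq_0[OF X rk]
    by blast
qed

lemma mat_inverse_gram_mat:
  fixes X :: "'a :: conjugatable_ordered_field mat"
  assumes X: "X \<in> carrier_mat m n" and rk: "vec_space.rank m X = n"
  obtains M where "mat_inverse (mat_adjoint X * X) = Some M" and "M \<in> carrier_mat n n"
    and "M * (mat_adjoint X * X) = 1\<^sub>m n" and "mat_adjoint M = M"
proof -
  have G: "mat_adjoint X * X \<in> carrier_mat n n" using X mat_adjoint_carrier_mat[OF X] by auto
  obtain M where M: "mat_inverse (mat_adjoint X * X) = Some M"
    using mat_inverse_exists_if_det_nonzero[OF G det_mat_adjoint_mult_self_nonzero[OF X rk]] .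
  note inv = mat_inverse(2)[OF G M]
  have "mat_adjoint (mat_adjoint X * X) = mat_adjoint X * X"
    using mat_adjoint_mult[OF mat_adjoint_carrier_mat[OF X] X] by simp
  then have "mat_adjoint M = M" using mat_adjoint_right_inverse_of_self_adjoint[OF G] inv by blast
  with M inv show thesis using that by blast
qed

lemma submatrix_append_rows_congruence:
  fixes Y :: "'a :: conjugatable_field mat"
  assumes Y: "Y \<in> carrier_mat r n" and Yt: "Yt \<in> carrier_mat k n" and M: "M \<in> carrier_mat n n"
  shows "submatrix ((Y @\<^sub>r Yt) * M * mat_adjoint (Y @\<^sub>r Yt)) {..<r} {..<r} = Y * M * mat_adjoint Y"
proof -
  have X: "Y @\<^sub>r Yt \<in> carrier_mat (r + k) n" using Y Yt by simp
  have rows: "row (Y @\<^sub>r Yt) i = row Y i" if "i < r" for i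
    using row_append_rows_top[OF Y Yt that] .
  show ?thesis
    using X Y M by (subst submatrix_lessThan) (auto simp: rows col_mat_adjoint)
qed

lemma gram_cross_term_eq_0:
  fixes Y :: "'a :: conjugatable_ordered_field mat"
  assumes Y: "Y \<in> carrier_mat r n" and Yt: "Yt \<in> carrier_mat k n" and M: "M \<in> carrier_mat n n"
    and M_adj: "mat_adjoint M = M"
    and MG: "M * (mat_adjoint Y * Y + mat_adjoint Yt * Yt) = 1\<^sub>m n"
    and YMY: "Y * M * mat_adjoint Y = 1\<^sub>m r"
  shows "Yt * M * mat_adjoint Y = 0\<^sub>m k r"
proof -
  define G where "G = mat_adjoint Y * Y + mat_adjoint Yt * Yt"
  define V where "V = M * mat_adjoint Y"
  have Y': "mat_adjoint Y \<in> carrier_mat n r" and Yt': "mat_adjoint Yt \<in> carrier_mat n k"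
    using Y Yt by simp_all
  have YY: "mat_adjoint Y * Y \<in> carrier_mat n n" and YtYt: "mat_adjoint Yt * Yt \<in> carrier_mat n n"
    using mult_carrier_mat[OF Y' Y] mult_carrier_mat[OF Yt' Yt] by auto
  have G: "G \<in> carrier_mat n n" unfolding G_def using YY YtYt by simp
  have V: "V \<in> carrier_mat n r" unfolding V_def using mult_carrier_mat[OF M Y'] .
  have V': "mat_adjoint V \<in> carrier_mat r n" using V by simp
  have YV: "Y * V = 1\<^sub>m r" unfolding V_def using YMY assoc_mult_mat[OF Y M Y'] by simp
  have "mat_adjoint V = Y * M" unfolding V_def mat_adjoint_mult[OF M Y'] M_adj by simp
  then have "mat_adjoint V * G = Y"
    using assoc_mult_mat[OF Y M G] MG[folded G_def] right_mult_one_mat[OF Y] by simp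
  then have VGV_1: "mat_adjoint V * G * V = 1\<^sub>m r" using YV by simp
  have "mat_adjoint V * G * V
      = mat_adjoint V * (mat_adjoint Y * Y) * V + mat_adjoint V * (mat_adjoint Yt * Yt) * V"
    unfolding G_def mult_add_distrib_mat[OF V' YY YtYt]
    using add_mult_distrib_mat[OF mult_carrier_mat[OF V' YY] mult_carrier_mat[OF V' YtYt] V] .
  also have "\<dots> = 1\<^sub>m r + mat_adjoint (Yt * V) * (Yt * V)"
    unfolding mat_adjoint_mult_congruence[OF Y V] mat_adjoint_mult_congruence[OF Yt V] YV by simp
  finally have sum_1: "1\<^sub>m r + mat_adjoint (Yt * V) * (Yt * V) = 1\<^sub>m r" using VGV_1 by simp
  have "mat_adjoint (Yt * V) * (Yt * V) = 0\<^sub>m r r"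
  proof (rule eq_matI)
    fix i j assume "i < dim_row (0\<^sub>m r r :: 'a mat)" "j < dim_col (0\<^sub>m r r :: 'a mat)"
    then show "(mat_adjoint (Yt * V) * (Yt * V)) $$ (i, j) = 0\<^sub>m r r $$ (i, j)"
      using arg_cong[OF sum_1, of "\<lambda>B. B $$ (i, j)"] Yt V by simp
  qed (use Yt V in simp_all)
  then have "Yt * V = 0\<^sub>m k r"
    using mat_adjoint_mult_self_eq_0[OF mult_carrier_mat[OF Yt V]] by simp
  then show ?thesis unfolding V_def using assoc_mult_mat[OF Yt M Y'] by simp
qed

lemma colspan_one_minus_right_inverse:
  fixes Y :: "'a :: field mat"
  assumes Y: "Y \<in> carrier_mat r n" and V: "V \<in> carrier_mat n r" and YV: "Y * V = 1\<^sub>m r"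
  shows "colspan (1\<^sub>m n - V * Y) = mat_kernel Y"
proof -
  have VY: "V * Y \<in> carrier_mat n n" using V Y by simp
  have A: "1\<^sub>m n - V * Y \<in> carrier_mat n n" using minus_carrier_mat[OF VY] .
  have Ax: "(1\<^sub>m n - V * Y) *\<^sub>v x = x - V *\<^sub>v (Y *\<^sub>v x)" if x: "x \<in> carrier_vec n" for x
    using minus_mult_distrib_mat_vec[OF one_carrier_mat VY x] assoc_mult_mat_vec[OF V Y x] x by simp
  have "(1\<^sub>m n - V * Y) *\<^sub>v x \<in> mat_kernel Y" if x: "x \<in> carrier_vec n" for x
  proof -
    have Yx: "Y *\<^sub>v x \<in> carrier_vec r" using Y x by simp
    have "Y *\<^sub>v (V *\<^sub>v (Y *\<^sub>v x)) = Y *\<^sub>v x"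
      using assoc_mult_mat_vec[OF Y V Yx, symmetric] YV Yx by simp
    then have "Y *\<^sub>v ((1\<^sub>m n - V * Y) *\<^sub>v x) = 0\<^sub>v r"
      using Ax[OF x] mult_minus_distrib_mat_vec[OF Y x, of "V *\<^sub>v (Y *\<^sub>v x)"] V Yx by simp
    then show ?thesis using mat_kernelI[OF Y] A x by simp
  qed
  moreover have "(1\<^sub>m n - V * Y) *\<^sub>v x = x" if "x \<in> mat_kernel Y" for x
    using Ax mat_kernelD[OF Y that] mult_mat_vec_zero[OF V] by simp
  ultimately show ?thesis
    unfolding colspan_eq[OF A] using mat_kernelD[OF Y] by blast
qed

lemma exists_kernel_colspan_fixing_if_congruence_eq_one:
  fixes Y :: "'a :: conjugatable_ordered_field mat"
  assumes Y: "Y \<in> carrier_mat r n" and Yt: "Yt \<in> carrier_mat k n" and M: "M \<in> carrier_mat n n"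
    and M_adj: "mat_adjoint M = M"
    and MG: "M * (mat_adjoint Y * Y + mat_adjoint Yt * Yt) = 1\<^sub>m n"
    and YMY: "Y * M * mat_adjoint Y = 1\<^sub>m r"
  shows "\<exists>A \<in> carrier_mat n n. colspan A = mat_kernel Y \<and> Yt * A = Yt"
proof -
  define V where "V = M * mat_adjoint Y"
  have Y': "mat_adjoint Y \<in> carrier_mat n r" using Y by simp
  have V: "V \<in> carrier_mat n r" unfolding V_def using mult_carrier_mat[OF M Y'] .
  have YV: "Y * V = 1\<^sub>m r" unfolding V_def using YMY assoc_mult_mat[OF Y M Y'] by simp
  have YtV: "Yt * V = 0\<^sub>m k r"
    unfolding V_def using gram_cross_term_eq_0[OF assms] assoc_mult_mat[OF Yt M Y'] by simp
  have VY: "V * Y \<in> carrier_mat n n" using V Y by simp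
  have "Yt * (1\<^sub>m n - V * Y) = Yt - Yt * V * Y"
    using mult_minus_distrib_mat[OF Yt one_carrier_mat VY] assoc_mult_mat[OF Yt V Y] Yt by simp
  also have "\<dots> = Yt" using YtV Yt Y by (intro eq_matI) auto
  finally show ?thesis
    using colspan_one_minus_right_inverse[OF Y V YV] minus_carrier_mat[OF VY] by blast
qed

lemma exists_equal_image_in_kernel:
  fixes Y :: "'a :: field mat"
  assumes Y: "Y \<in> carrier_mat r n" and Yt: "Yt \<in> carrier_mat k n" and A: "A \<in> carrier_mat n l"
    and A_ker: "colspan A = mat_kernel Y" and Yt_A: "colspan Yt = colspan (Yt * A)"
    and w: "w \<in> carrier_vec n"
  shows "\<exists>v \<in> carrier_vec n. Y *\<^sub>v v = Y *\<^sub>v w \<and> Yt *\<^sub>v v = 0\<^sub>v k"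
proof -
  have "Yt *\<^sub>v w \<in> colspan (Yt * A)" unfolding Yt_A[symmetric] colspan_eq[OF Yt] using Yt w by auto
  then obtain c where c: "c \<in> carrier_vec l" and Ytc: "Yt *\<^sub>v (A *\<^sub>v c) = Yt *\<^sub>v w"
    unfolding colspan_eq[OF mult_carrier_mat[OF Yt A]] using assoc_mult_mat_vec[OF Yt A] by auto
  have Ac: "A *\<^sub>v c \<in> carrier_vec n" using A c by simp
  have "A *\<^sub>v c \<in> mat_kernel Y" unfolding A_ker[symmetric] colspan_eq[OF A] using A c by auto
  then have YAc: "Y *\<^sub>v (A *\<^sub>v c) = 0\<^sub>v r" using mat_kernelD[OF Y] by blast
  have "Y *\<^sub>v (w - A *\<^sub>v c) = Y *\<^sub>v w"
    using mult_minus_distrib_mat_vec[OF Y w Ac] YAc Y w by simp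
  moreover have "Yt *\<^sub>v (w - A *\<^sub>v c) = 0\<^sub>v k"
    using mult_minus_distrib_mat_vec[OF Yt w Ac] Ytc Yt w by simp
  ultimately show ?thesis using w Ac by (intro bexI[of _ "w - A *\<^sub>v c"]) auto
qed

lemma congruence_eq_one_if_preimages_in_kernel:
  fixes Y :: "'a :: conjugatable_field mat"
  assumes Y: "Y \<in> carrier_mat r n" and Yt: "Yt \<in> carrier_mat k n" and M: "M \<in> carrier_mat n n"
    and MG: "M * (mat_adjoint Y * Y + mat_adjoint Yt * Yt) = 1\<^sub>m n"
    and preimage: "\<And>u. u \<in> carrier_vec r \<Longrightarrow> \<exists>v \<in> carrier_vec n. Y *\<^sub>v v = u \<and> Yt *\<^sub>v v = 0\<^sub>v k"
  shows "Y * M * mat_adjoint Y = 1\<^sub>m r"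
proof (rule eq_one_mat_if_mult_vec_id)
  have Y': "mat_adjoint Y \<in> carrier_mat n r" and Yt': "mat_adjoint Yt \<in> carrier_mat n k"
    using Y Yt by simp_all
  have G: "mat_adjoint Y * Y + mat_adjoint Yt * Yt \<in> carrier_mat n n"
    using mult_carrier_mat[OF Y' Y] mult_carrier_mat[OF Yt' Yt] by simp
  show "Y * M * mat_adjoint Y \<in> carrier_mat r r" using Y M Y' by auto
  fix u :: "'a vec" assume u: "u \<in> carrier_vec r"
  then obtain v where v: "v \<in> carrier_vec n" and Yv: "Y *\<^sub>v v = u" and Ytv: "Yt *\<^sub>v v = 0\<^sub>v k"
    using preimage by blast
  have Gv: "(mat_adjoint Y * Y + mat_adjoint Yt * Yt) *\<^sub>v v = mat_adjoint Y *\<^sub>v u"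
    using add_mult_distrib_mat_vec[OF mult_carrier_mat[OF Y' Y] mult_carrier_mat[OF Yt' Yt] v]
      assoc_mult_mat_vec[OF Y' Y v] assoc_mult_mat_vec[OF Yt' Yt v] mult_mat_vec_zero[OF Yt'] Yv Ytv Y' u
    by simp
  have "(Y * M * mat_adjoint Y) *\<^sub>v u = Y *\<^sub>v (M *\<^sub>v (mat_adjoint Y *\<^sub>v u))"
    using assoc_mult_mat_vec[OF mult_carrier_mat[OF Y M] Y' u] assoc_mult_mat_vec[OF Y M] Y' u by simp
  also have "\<dots> = Y *\<^sub>v ((M * (mat_adjoint Y * Y + mat_adjoint Yt * Yt)) *\<^sub>v v)"
    unfolding Gv[symmetric] using assoc_mult_mat_vec[OF M G v] by simp
  also have "\<dots> = u" using MG v Yv by simp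
  finally show "(Y * M * mat_adjoint Y) *\<^sub>v u = u" .
qed

theorem lemma8:
  fixes m n r :: nat and X Y Yt :: "complex mat"
  assumes "0 < r" and "r \<le> n" and "n \<le> m"
    and "X \<in> carrier_mat m n" and "mrank X = n"
    and "Y \<in> carrier_mat r n" and "Yt \<in> carrier_mat (m - r) n"
    and "X = Y @\<^sub>r Yt" and "mrank Y = r"
  shows "submatrix (proj_mat X) {..<r} {..<r} = 1\<^sub>m r \<longleftrightarrow>
    (\<exists>k. \<exists>A \<in> carrier_mat n k. colspan A = mat_kernel Y \<and> colspan Yt = colspan (Yt * A))"
proof -
  note X = assms(4) and Y = assms(6) and Yt = assms(7) and X_split = assms(8)
  have rk_X: "vec_space.rank m X = n" using assms(5) X unfolding mrank_def by simp
  have rk_Y: "vec_space.rank r Y = r" using assms(9) Y unfolding mrank_def by simp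
  obtain M where M_inv: "mat_inverse (mat_adjoint X * X) = Some M" and M: "M \<in> carrier_mat n n"
    and MG: "M * (mat_adjoint X * X) = 1\<^sub>m n" and M_adj: "mat_adjoint M = M"
    using mat_inverse_gram_mat[OF X rk_X] .
  have MG': "M * (mat_adjoint Y * Y + mat_adjoint Yt * Yt) = 1\<^sub>m n"
    using MG mat_adjoint_append_rows_mult_self[OF Y Yt] unfolding X_split by simp
  have "submatrix (proj_mat X) {..<r} {..<r} = Y * M * mat_adjoint Y"
    unfolding proj_mat_def M_inv using submatrix_append_rows_congruence[OF Y Yt M] X_split by simp
  moreover have "\<exists>k. \<exists>A \<in> carrier_mat n k. colspan A = mat_kernel Y \<and> colspan Yt = colspan (Yt * A)"
    if "Y * M * mat_adjoint Y = 1\<^sub>m r"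
    using exists_kernel_colspan_fixing_if_congruence_eq_one[OF Y Yt M M_adj MG' that] by metis
  moreover have "Y * M * mat_adjoint Y = 1\<^sub>m r"
    if "A \<in> carrier_mat n k" "colspan A = mat_kernel Y" "colspan Yt = colspan (Yt * A)" for k A
  proof (rule congruence_eq_one_if_preimages_in_kernel[OF Y Yt M MG'])
    fix u :: "complex vec" assume "u \<in> carrier_vec r"
    then obtain w where "w \<in> carrier_vec n" "Y *\<^sub>v w = u"
      using vec_space.full_row_rank_col_space[OF Y rk_Y] vec_space.col_space_eq[OF Y] Y by auto
    then show "\<exists>v \<in> carrier_vec n. Y *\<^sub>v v = u \<and> Yt *\<^sub>v v = 0\<^sub>v (m - r)"
      using exists_equal_image_in_kernel[OF Y Yt that] by metis
  qed
  ultimately show ?thesis by auto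
qed

end
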